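(* Let $M$ be a Sidon set in $\mathbb{F}_2^t$ with $|M|\geq 3$. Then the following are equivalent: (a) $M$ is maximal; (b) $S_3(M) = \mathbb{F}_2^t$; (c) $S_3^*(M)\cup M = \mathbb{F}_2^t$ and $S_3^*(M)\cap M = \emptyset$. Here $S_3(M)=\{m_1+m_2+m_3 : m_1,m_2,m_3\in M\}$ and $S_3^*(M)=\{m_1+m_2+m_3 : m_1,m_2,m_3\in M \text{ pairwise distinct}\}$.
   Context: $\mathbb{F}_2^t$ is the $t$-dimensional vector space over $\mathbb{F}_2$. A subset $M\subseteq \mathbb{F}_2^t$ is Sidon if $m_1+m_2\neq m_3+m_4$ for all pairwise distinct $m_1,m_2,m_3,m_4\in M$. A Sidon set $M$ is maximal if $M=S$ for every Sidon set $S$ with $M\subseteq S\subseteq\mathbb{F}_2^t$. *)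

theory Defs
  imports "HOL-Analysis.Analysis" "HOL-Library.Z2"
begin

text \<open>F_2^t is modelled as the type bit ^ 'n with t = CARD('n); addition is componentwise.\<close>

definition sidon :: "('a::ab_group_add) set \<Rightarrow> bool" where
  "sidon M \<longleftrightarrow> (\<forall>m1\<in>M. \<forall>m2\<in>M. \<forall>m3\<in>M. \<forall>m4\<in>M.
     distinct [m1, m2, m3, m4] \<longrightarrow> m1 + m2 \<noteq> m3 + m4)"

definition maximal_sidon :: "('a::ab_group_add) set \<Rightarrow> bool" where
  "maximal_sidon M \<longleftrightarrow> sidon M \<and> (\<forall>S. sidon S \<and> M \<subseteq> S \<longrightarrow> M = S)"

definition S3 :: "('a::ab_group_add) set \<Rightarrow> 'a set" where
  "S3 M = {m1 + m2 + m3 | m1 m2 m3. m1 \<in> M \<and> m2 \<in> M \<and> m3 \<in> M}"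

definition S3_star :: "('a::ab_group_add) set \<Rightarrow> 'a set" where
  "S3_star M = {m1 + m2 + m3 | m1 m2 m3. m1 \<in> M \<and> m2 \<in> M \<and> m3 \<in> M \<and> distinct [m1, m2, m3]}"

end

theory Submission
  imports Defs
begin

text \<open>In a group of exponent 2, an equation a + b = c + d says that a + b + c + d = 0, a
  condition symmetric in all four elements. Hence M is Sidon exactly when no element of M is the
  sum of three other elements of M, and a new point x can be added to a Sidon set M exactly when
  x \<notin> S3_star M. The same symmetry shows that a Sidon set is disjoint from S3_star M, and sums
  with a repeated summand collapse to single elements, so S3 M = S3_star M \<union> M. Maximality of M
  thus amounts to S3_star M \<union> M covering the whole space.\<close>

class boolean_group = ab_group_add +
  assumes add_self [simp]: "x + x = 0"
begin

lemma add_self_left [simp]: "x + (x + y) = y"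
  by (simp flip: add.assoc)

lemma add_eq_0_iff_eq: "x + y = 0 \<longleftrightarrow> x = y"
  by (metis add_self add_self_left add.right_neutral)

end

instance bit :: boolean_group
  by standard simp

instance vec :: (boolean_group, finite) boolean_group
  by standard (simp add: vec_eq_iff)

lemma sidon_subset: "sidon S \<Longrightarrow> M \<subseteq> S \<Longrightarrow> sidon M"
  unfolding sidon_def by blast

lemma sidon_iff_no_zero_sum4:
  fixes M :: "'a::boolean_group set"
  shows "sidon M \<longleftrightarrow>
    (\<forall>a\<in>M. \<forall>b\<in>M. \<forall>c\<in>M. \<forall>d\<in>M. distinct [a, b, c, d] \<longrightarrow> a + b + c + d \<noteq> 0)"
proof -
  have "a + b = c + d \<longleftrightarrow> a + b + c + d = 0" for a b c d :: 'a
    using add_eq_0_iff_eq[of "a + b" "c + d"] by (simp add: add.assoc)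
  then show ?thesis
    unfolding sidon_def by simp
qed

lemma S3_eq_S3_star_Un:
  fixes M :: "'a::boolean_group set"
  shows "S3 M = S3_star M \<union> M"
proof
  show "S3 M \<subseteq> S3_star M \<union> M"
  proof
    fix x assume "x \<in> S3 M"
    then obtain a b c where abc: "a \<in> M" "b \<in> M" "c \<in> M" "x = a + b + c"
      unfolding S3_def by blast
    show "x \<in> S3_star M \<union> M"
    proof (cases "distinct [a, b, c]")
      case True
      then show ?thesis using abc unfolding S3_star_def by blast
    next
      case False
      then have "x = a \<or> x = b \<or> x = c"
        using abc(4) by (auto simp: ac_simps)
      then show ?thesis using abc by blast
    qed
  qed
next
  have "x \<in> S3 M" if "x \<in> M" for x
  proof -
    have "x = x + x + x" by simp
    then show ?thesis using that unfolding S3_def by blast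
  qed
  then show "S3_star M \<union> M \<subseteq> S3 M"
    unfolding S3_star_def S3_def by blast
qed

lemma sidon_zero_sum4D:
  fixes M :: "'a::boolean_group set"
  assumes "sidon M" "a \<in> M" "b \<in> M" "c \<in> M" "d \<in> M" "distinct [a, b, c, d]"
  shows "a + b + c + d \<noteq> 0"
  using assms unfolding sidon_iff_no_zero_sum4 by blast

lemma sidon_S3_star_disjoint:
  fixes M :: "'a::boolean_group set"
  assumes "sidon M"
  shows "S3_star M \<inter> M = {}"
proof -
  have "x \<notin> M" if abc: "a \<in> M" "b \<in> M" "c \<in> M" "distinct [a, b, c]" "x = a + b + c" for x a b c
  proof
    assume "x \<in> M"
    have "x + a = b + c" "x + b = a + c" "x + c = a + b"
      using abc(5) by (simp_all add: ac_simps)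
    then have "x \<notin> {a, b, c}"
      using abc(4) add_eq_0_iff_eq by force
    moreover have "x + a + b + c = 0"
      using abc(5) by (simp add: ac_simps)
    ultimately show False
      using sidon_zero_sum4D[OF assms \<open>x \<in> M\<close> abc(1-3)] abc(4) by simp
  qed
  then show ?thesis
    unfolding S3_star_def by blast
qed

lemma sidon_insert_iff:
  fixes M :: "'a::boolean_group set"
  assumes "sidon M" "x \<notin> M"
  shows "sidon (insert x M) \<longleftrightarrow> x \<notin> S3_star M"
proof
  assume "sidon (insert x M)"
  show "x \<notin> S3_star M"
  proof
    assume "x \<in> S3_star M"
    then obtain a b c where abc: "a \<in> M" "b \<in> M" "c \<in> M" "distinct [a, b, c]" "x = a + b + c"
      unfolding S3_star_def by blast
    have "x + a + b + c = 0"
      using abc(5) by (simp add: ac_simps)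
    moreover have "distinct [x, a, b, c]"
      using abc(1-4) \<open>x \<notin> M\<close> by auto
    ultimately show False
      using sidon_zero_sum4D[OF \<open>sidon (insert x M)\<close>] abc(1-3) by simp
  qed
next
  assume x_notin: "x \<notin> S3_star M"
  have x_zero_sum: False
    if "b \<in> M" "c \<in> M" "d \<in> M" "distinct [x, b, c, d]" "x + b + c + d = 0" for b c d
  proof -
    have "x = b + c + d"
      using that(5) add_eq_0_iff_eq[of x "b + c + d"] by (simp add: add.assoc)
    moreover have "distinct [b, c, d]"
      using that(4) by simp
    ultimately show False
      using that(1-3) x_notin unfolding S3_star_def by blast
  qed
  show "sidon (insert x M)"
    unfolding sidon_iff_no_zero_sum4
  proof (intro ballI impI notI)
    fix a b c d
    assume in_M: "a \<in> insert x M" "b \<in> insert x M" "c \<in> insert x M" "d \<in> insert x M"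
      and dist: "distinct [a, b, c, d]" and zero: "a + b + c + d = 0"
    consider "a = x" | "b = x" | "c = x" | "d = x" | "a \<in> M" "b \<in> M" "c \<in> M" "d \<in> M"
      using in_M by blast
    then show False
    proof cases
      case 1
      then show False using x_zero_sum[of b c d] in_M dist zero by auto
    next
      case 2
      have "x + a + c + d = 0" using zero 2 by (simp add: ac_simps)
      then show False using x_zero_sum[of a c d] in_M dist 2 by auto
    next
      case 3
      have "x + a + b + d = 0" using zero 3 by (simp add: ac_simps)
      then show False using x_zero_sum[of a b d] in_M dist 3 by auto
    next
      case 4
      have "x + a + b + c = 0" using zero 4 by (simp add: ac_simps)
      then show False using x_zero_sum[of a b c] in_M dist 4 by auto
    next
      case 5
      then show False using sidon_zero_sum4D[OF assms(1)] dist zero by blast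
    qed
  qed
qed

lemma maximal_sidon_iff_S3_eq_UNIV:
  fixes M :: "'a::boolean_group set"
  assumes "sidon M"
  shows "maximal_sidon M \<longleftrightarrow> S3 M = UNIV"
proof
  assume max: "maximal_sidon M"
  have "x \<in> S3_star M \<union> M" for x
  proof (rule ccontr)
    assume "x \<notin> S3_star M \<union> M"
    then have "sidon (insert x M)"
      using sidon_insert_iff[OF assms] by blast
    then show False
      using max \<open>x \<notin> S3_star M \<union> M\<close> unfolding maximal_sidon_def by blast
  qed
  then show "S3 M = UNIV"
    unfolding S3_eq_S3_star_Un by blast
next
  assume "S3 M = UNIV"
  have "M = S" if "sidon S" "M \<subseteq> S" for S
  proof (rule ccontr)
    assume "M \<noteq> S"
    then obtain x where "x \<in> S" "x \<notin> M"
      using \<open>M \<subseteq> S\<close> by blast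
    then have "sidon (insert x M)"
      using sidon_subset[OF \<open>sidon S\<close>] \<open>M \<subseteq> S\<close> by blast
    moreover have "x \<in> S3_star M"
      using \<open>S3 M = UNIV\<close> \<open>x \<notin> M\<close> unfolding S3_eq_S3_star_Un by blast
    ultimately show False
      using sidon_insert_iff[OF assms \<open>x \<notin> M\<close>] by blast
  qed
  then show "maximal_sidon M"
    unfolding maximal_sidon_def using assms by blast
qed

theorem proposition1p5:
  fixes M :: "(bit ^ 'n) set"
  assumes "sidon M" and "card M \<ge> 3"
  shows "(maximal_sidon M \<longleftrightarrow> S3 M = UNIV)
       \<and> (S3 M = UNIV \<longleftrightarrow> (S3_star M \<union> M = UNIV \<and> S3_star M \<inter> M = {}))"
  using maximal_sidon_iff_S3_eq_UNIV[OF assms(1)] sidon_S3_star_disjoint[OF assms(1)]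
  by (simp add: S3_eq_S3_star_Un)

end
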